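(* Let $\mathbb{k}$ be a field, and let $\mathbb{k}^{2n} = \mathbb{k}^n_x \times \mathbb{k}^n_\xi$ have coordinates $(x,\xi) = (x_1,\dots,x_n,\xi_1,\dots,\xi_n)$. Let $X \subseteq \mathbb{k}^n_\xi$ be a subvariety. If $L$ is an $\ell \times n$ matrix with entries in $\mathbb{k}$, then the variety $\mathcal{V}(Lx\xi)$ of the bilinear forms $Lx\xi$ in $\mathbb{k}^{2n}$ is transverse to $\mathbb{k}^n \times X$ at any smooth point of $\mathbb{k}^n \times X$ whose $\xi$-coordinates are all nonzero.
   Context: Here $x\xi$ denotes the column vector $(x_1\xi_1,\dots,x_n\xi_n)^T$, and $Lx\xi$ is the vector of $\ell$ bilinear forms obtained by multiplying $L$ times $x\xi$; $\mathcal{V}(Lx\xi)\subseteq \mathbb{k}^{2n}$ is their common zero locus. Varieties are considered over the algebraic closure of $\mathbb{k}$ when needed. Two subvarieties $V,W$ of an ambient affine space are transverse at a point $p \in V\cap W$ if the (Zariski) tangent spaces $T_pV$ and $T_pW$ sum to the whole tangent space of the ambient space; the claim concerns points $p$ of $\mathbb{k}^n\times X$ (with all $\xi$-coordinates nonzero, smooth on $\mathbb{k}^n\times X$) lying in $\mathcal{V}(Lx\xi)$. *)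

theory Defs
  imports "HOL-Library.Poly_Mapping" "HOL-Computational_Algebra.Polynomial"
begin

text \<open>Multivariate polynomials over a field 'a in variables indexed by 'v:
  finitely supported maps from exponent vectors (monomials) to coefficients.\<close>

type_synonym ('v, 'a) mpoly = "('v \<Rightarrow>\<^sub>0 nat) \<Rightarrow>\<^sub>0 'a"

definition mpoly_eval :: "('v, 'a::comm_ring_1) mpoly \<Rightarrow> ('v \<Rightarrow> 'a) \<Rightarrow> 'a" where
  "mpoly_eval f p =
     (\<Sum>m\<in>Poly_Mapping.keys f. Poly_Mapping.lookup f m * (\<Prod>i\<in>Poly_Mapping.keys m. p i ^ Poly_Mapping.lookup m i))"

definition mpoly_diff :: "('v, 'a::comm_ring_1) mpoly \<Rightarrow> ('v \<Rightarrow> 'a) \<Rightarrow> ('v \<Rightarrow> 'a) \<Rightarrow> 'a" where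
  "mpoly_diff f p v =
     (\<Sum>m\<in>Poly_Mapping.keys f. Poly_Mapping.lookup f m *
        (\<Sum>i\<in>Poly_Mapping.keys m. of_nat (Poly_Mapping.lookup m i) * p i ^ (Poly_Mapping.lookup m i - 1)
            * (\<Prod>j\<in>Poly_Mapping.keys m - {i}. p j ^ Poly_Mapping.lookup m j) * v i))"

definition zero_set :: "('v, 'a::comm_ring_1) mpoly set \<Rightarrow> ('v \<Rightarrow> 'a) set" where
  "zero_set F = {p. \<forall>f\<in>F. mpoly_eval f p = 0}"

definition zariski_closed :: "('v \<Rightarrow> 'a::comm_ring_1) set \<Rightarrow> bool" where
  "zariski_closed V \<longleftrightarrow> (\<exists>F. V = zero_set F)"

definition vanishing_ideal :: "('v \<Rightarrow> 'a::comm_ring_1) set \<Rightarrow> ('v, 'a) mpoly set" where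
  "vanishing_ideal V = {f. \<forall>p\<in>V. mpoly_eval f p = 0}"

definition tangent_space :: "('v \<Rightarrow> 'a::comm_ring_1) set \<Rightarrow> ('v \<Rightarrow> 'a) \<Rightarrow> ('v \<Rightarrow> 'a) set" where
  "tangent_space V p = {v. \<forall>f\<in>vanishing_ideal V. mpoly_diff f p v = 0}"

definition transverse_at :: "('v \<Rightarrow> 'a::comm_ring_1) set \<Rightarrow> ('v \<Rightarrow> 'a) set \<Rightarrow> ('v \<Rightarrow> 'a) \<Rightarrow> bool" where
  "transverse_at V W p \<longleftrightarrow> p \<in> V \<and> p \<in> W \<and>
     (\<forall>w. \<exists>a\<in>tangent_space V p. \<exists>b\<in>tangent_space W p. w = (\<lambda>i. a i + b i))"

definition irreducible_closed :: "('v \<Rightarrow> 'a::comm_ring_1) set \<Rightarrow> bool" where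
  "irreducible_closed Z \<longleftrightarrow> zariski_closed Z \<and> Z \<noteq> {} \<and>
     (\<forall>A B. zariski_closed A \<longrightarrow> zariski_closed B \<longrightarrow> Z \<subseteq> A \<union> B \<longrightarrow> Z \<subseteq> A \<or> Z \<subseteq> B)"

text \<open>Local dimension of V at p: the supremum of lengths n of chains
  Z_0 < Z_1 < ... < Z_n of irreducible closed subsets of V with p in Z_0
  (= the maximal dimension of an irreducible component of V through p).\<close>
definition local_dim :: "('v \<Rightarrow> 'a::comm_ring_1) set \<Rightarrow> ('v \<Rightarrow> 'a) \<Rightarrow> nat" where
  "local_dim V p = Sup {n. \<exists>Z::nat \<Rightarrow> ('v \<Rightarrow> 'a) set.
      (\<forall>i\<le>n. irreducible_closed (Z i) \<and> Z i \<subseteq> V) \<and>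
      (\<forall>i<n. Z i \<subset> Z (Suc i)) \<and> p \<in> Z 0}"

definition lin_indep :: "('v \<Rightarrow> 'a::field) set \<Rightarrow> bool" where
  "lin_indep B \<longleftrightarrow> (\<forall>c. (\<lambda>i. \<Sum>b\<in>B. c b * b i) = (\<lambda>i. 0) \<longrightarrow> (\<forall>b\<in>B. c b = 0))"

definition lin_span :: "('v \<Rightarrow> 'a::field) set \<Rightarrow> ('v \<Rightarrow> 'a) set" where
  "lin_span B = {w. \<exists>c. w = (\<lambda>i. \<Sum>b\<in>B. c b * b i)}"

definition smooth_point :: "('v \<Rightarrow> 'a::field) set \<Rightarrow> ('v \<Rightarrow> 'a) \<Rightarrow> bool" where
  "smooth_point V p \<longleftrightarrow> p \<in> V \<and>
     (\<exists>B. finite B \<and> B \<subseteq> tangent_space V p \<and> lin_indep B \<and>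
          tangent_space V p \<subseteq> lin_span B \<and> card B = local_dim V p)"

definition alg_closed :: "'a::field itself \<Rightarrow> bool" where
  "alg_closed _ \<longleftrightarrow> (\<forall>q::'a poly. degree q > 0 \<longrightarrow> (\<exists>x. poly q x = 0))"

text \<open>Coordinates on k^{2n}: Inl i is x_i, Inr i is xi_i.
  The bilinear form (L x xi)_r = sum_i L r i * x_i * xi_i.\<close>
definition bilin_form :: "(nat \<Rightarrow> 'n::finite \<Rightarrow> 'a::comm_ring_1) \<Rightarrow> nat \<Rightarrow> ('n + 'n, 'a) mpoly" where
  "bilin_form L r = (\<Sum>i\<in>UNIV.
      Poly_Mapping.single (Poly_Mapping.single (Inl i) 1 + Poly_Mapping.single (Inr i) 1) (L r i))"

definition prod_with_affine :: "('n \<Rightarrow> 'a) set \<Rightarrow> ('n + 'n \<Rightarrow> 'a) set" where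
  "prod_with_affine X = {z. (\<lambda>i. z (Inr i)) \<in> X}"

end

theory Submission
  imports Defs
begin

text \<open>The zero set V of the bilinear forms is stable under the torus action
  (x_j, \<xi>_j) \<mapsto> (x_j / c, c \<xi>_j), and k^n \<times> X is stable under translations in the
  x-directions. Differentiating these one-parameter families at p (possible because an
  algebraically closed field is infinite, so a one-variable polynomial vanishing on the
  orbit is zero) yields the tangent vectors -x_j \<partial>/\<partial>x_j + \<xi>_j \<partial>/\<partial>\<xi>_j of V and
  \<partial>/\<partial>x_j of k^n \<times> X. When every \<xi>_j is nonzero these 2n vectors span k^{2n}.\<close>

lemma infinite_UNIV_if_alg_closed:
  assumes "alg_closed TYPE('a::field)"
  shows "infinite (UNIV :: 'a set)"
proof
  assume fin: "finite (UNIV :: 'a set)"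
  define q :: "'a poly" where "q = (\<Prod>a\<in>UNIV. [:-a,1:]) + 1"
  have "degree (\<Prod>a\<in>(UNIV::'a set). [:-a,1:]) = card (UNIV::'a set)"
    by (subst degree_prod_eq_sum_degree) auto
  moreover have "card (UNIV::'a set) > 0" using fin by (simp add: card_gt_0_iff)
  ultimately have "degree q > 0" unfolding q_def by (subst degree_add_eq_left) auto
  then obtain x where "poly q x = 0" using assms unfolding alg_closed_def by blast
  moreover have "poly (\<Prod>a\<in>(UNIV::'a set). [:-a,1:]) x = 0"
    using fin by (simp add: poly_prod prod_zero_iff)
  ultimately show False unfolding q_def by simp
qed

lemma pderiv_sum: "pderiv (\<Sum>x\<in>A. f x) = (\<Sum>x\<in>A. pderiv (f x))"
  using higher_pderiv_sum[of 1 f A] by simp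

lemma poly_eq_0_if_infinite_roots:
  fixes P :: "'a::idom poly"
  assumes "infinite A" "\<And>c. c \<in> A \<Longrightarrow> poly P c = 0"
  shows "P = 0"
  using assms poly_roots_finite[of P] finite_subset[of A "{c. poly P c = 0}"] by blast

definition monom_eval :: "('v \<Rightarrow>\<^sub>0 nat) \<Rightarrow> ('v \<Rightarrow> 'a::comm_ring_1) \<Rightarrow> 'a" where
  "monom_eval m p = (\<Prod>i\<in>Poly_Mapping.keys m. p i ^ Poly_Mapping.lookup m i)"

lemma monom_eval_split:
  "monom_eval m p =
     p k ^ Poly_Mapping.lookup m k * (\<Prod>i\<in>Poly_Mapping.keys m - {k}. p i ^ Poly_Mapping.lookup m i)"
  unfolding monom_eval_def
  by (cases "k \<in> Poly_Mapping.keys m") (simp_all add: prod.remove in_keys_iff)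

lemma monom_eval_split2:
  assumes "a \<noteq> b"
  shows "monom_eval m p = p a ^ Poly_Mapping.lookup m a * p b ^ Poly_Mapping.lookup m b *
           (\<Prod>i\<in>Poly_Mapping.keys m - {a,b}. p i ^ Poly_Mapping.lookup m i)"
proof -
  have "(\<Prod>i\<in>Poly_Mapping.keys m - {a}. p i ^ Poly_Mapping.lookup m i) =
        p b ^ Poly_Mapping.lookup m b * (\<Prod>i\<in>Poly_Mapping.keys m - {a} - {b}. p i ^ Poly_Mapping.lookup m i)"
  proof (cases "b \<in> Poly_Mapping.keys m")
    case True
    with assms have "b \<in> Poly_Mapping.keys m - {a}" by auto
    then show ?thesis by (simp add: prod.remove)
  qed (simp add: in_keys_iff)
  moreover have "Poly_Mapping.keys m - {a} - {b} = Poly_Mapping.keys m - {a,b}" by auto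
  ultimately show ?thesis using monom_eval_split[of m p a] by (simp add: mult.assoc)
qed

lemma mpoly_eval_eq_sum_monom_eval:
  "mpoly_eval f p = (\<Sum>m\<in>Poly_Mapping.keys f. Poly_Mapping.lookup f m * monom_eval m p)"
  unfolding mpoly_eval_def monom_eval_def ..

lemma mpoly_eval_superset:
  assumes "finite S" "Poly_Mapping.keys f \<subseteq> S"
  shows "mpoly_eval f p = (\<Sum>m\<in>S. Poly_Mapping.lookup f m * monom_eval m p)"
  unfolding mpoly_eval_eq_sum_monom_eval
  by (rule sum.mono_neutral_left) (use assms in \<open>auto simp: in_keys_iff\<close>)

lemma mpoly_eval_add: "mpoly_eval (f + g) p = mpoly_eval f p + mpoly_eval g p"
proof -
  let ?S = "Poly_Mapping.keys f \<union> Poly_Mapping.keys g"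
  have fin: "finite ?S" by simp
  have "mpoly_eval (f + g) p = (\<Sum>m\<in>?S. Poly_Mapping.lookup (f + g) m * monom_eval m p)"
    by (rule mpoly_eval_superset[OF fin keys_add])
  also have "\<dots> = (\<Sum>m\<in>?S. Poly_Mapping.lookup f m * monom_eval m p) +
                  (\<Sum>m\<in>?S. Poly_Mapping.lookup g m * monom_eval m p)"
    by (simp add: lookup_add distrib_right sum.distrib)
  also have "\<dots> = mpoly_eval f p + mpoly_eval g p"
    using mpoly_eval_superset[OF fin, of f p] mpoly_eval_superset[OF fin, of g p] by simp
  finally show ?thesis .
qed

lemma mpoly_eval_zero [simp]: "mpoly_eval 0 p = 0"
  unfolding mpoly_eval_def by simp

lemma mpoly_eval_sum: "mpoly_eval (\<Sum>i\<in>A. g i) p = (\<Sum>i\<in>A. mpoly_eval (g i) p)"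
  by (induction A rule: infinite_finite_induct) (simp_all add: mpoly_eval_add)

lemma mpoly_eval_single: "mpoly_eval (Poly_Mapping.single m c) p = c * monom_eval m p"
  by (subst mpoly_eval_superset[of "{m}"]) auto

lemma mpoly_eval_fun_upd:
  "mpoly_eval f (p(k := y)) =
     (\<Sum>m\<in>Poly_Mapping.keys f. Poly_Mapping.lookup f m *
        (y ^ Poly_Mapping.lookup m k * (\<Prod>i\<in>Poly_Mapping.keys m - {k}. p i ^ Poly_Mapping.lookup m i)))"
  unfolding mpoly_eval_eq_sum_monom_eval
  by (intro sum.cong refl) (simp add: monom_eval_split[of _ _ k])

lemma mpoly_diff_add: "mpoly_diff f p (\<lambda>i. u i + w i) = mpoly_diff f p u + mpoly_diff f p w"
  unfolding mpoly_diff_def by (simp add: distrib_left distrib_right sum.distrib)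

lemma mpoly_diff_scale: "mpoly_diff f p (\<lambda>i. c * u i) = c * mpoly_diff f p u"
  unfolding mpoly_diff_def by (simp add: sum_distrib_left mult_ac)

lemma mpoly_diff_lincomb_eq_0:
  assumes "finite J" "\<And>j. j \<in> J \<Longrightarrow> mpoly_diff f p (u j) = 0"
  shows "mpoly_diff f p (\<lambda>i. \<Sum>j\<in>J. s j * u j i) = 0"
  using assms
proof (induction J rule: finite_induct)
  case empty
  then show ?case by (simp add: mpoly_diff_def)
next
  case (insert x F)
  then have "mpoly_diff f p (\<lambda>i. \<Sum>j\<in>insert x F. s j * u j i) =
             s x * mpoly_diff f p (u x) + mpoly_diff f p (\<lambda>i. \<Sum>j\<in>F. s j * u j i)"
    by (simp add: mpoly_diff_add mpoly_diff_scale)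
  with insert show ?case by simp
qed

lemma mpoly_diff_unit_vector:
  "mpoly_diff f p (\<lambda>i. if i = k then 1 else 0) =
     (\<Sum>m\<in>Poly_Mapping.keys f. Poly_Mapping.lookup f m *
        (of_nat (Poly_Mapping.lookup m k) * p k ^ (Poly_Mapping.lookup m k - 1) *
         (\<Prod>i\<in>Poly_Mapping.keys m - {k}. p i ^ Poly_Mapping.lookup m i)))"
  unfolding mpoly_diff_def
proof (intro sum.cong refl)
  fix m
  show "Poly_Mapping.lookup f m *
        (\<Sum>i\<in>Poly_Mapping.keys m. of_nat (Poly_Mapping.lookup m i) * p i ^ (Poly_Mapping.lookup m i - 1) *
            (\<Prod>j\<in>Poly_Mapping.keys m - {i}. p j ^ Poly_Mapping.lookup m j) * (if i = k then 1 else 0)) =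
        Poly_Mapping.lookup f m *
        (of_nat (Poly_Mapping.lookup m k) * p k ^ (Poly_Mapping.lookup m k - 1) *
         (\<Prod>i\<in>Poly_Mapping.keys m - {k}. p i ^ Poly_Mapping.lookup m i))"
    by (cases "k \<in> Poly_Mapping.keys m") (simp_all add: in_keys_iff if_distrib cong: if_cong)
qed

lemma mpoly_diff_scaled_unit_vector:
  "mpoly_diff f p (\<lambda>i. if i = k then p k else 0) =
     (\<Sum>m\<in>Poly_Mapping.keys f. Poly_Mapping.lookup f m * monom_eval m p * of_nat (Poly_Mapping.lookup m k))"
proof -
  have v: "(\<lambda>i. if i = k then p k else 0) = (\<lambda>i. p k * (if i = k then 1 else 0))" by auto
  have "p k * (a * (of_nat (Poly_Mapping.lookup m k) * p k ^ (Poly_Mapping.lookup m k - 1) *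
                   (\<Prod>i\<in>Poly_Mapping.keys m - {k}. p i ^ Poly_Mapping.lookup m i)))
        = a * monom_eval m p * of_nat (Poly_Mapping.lookup m k)" for a m
    by (cases "Poly_Mapping.lookup m k") (simp_all add: monom_eval_split[of m p k] mult_ac)
  then show ?thesis
    unfolding v mpoly_diff_scale mpoly_diff_unit_vector sum_distrib_left by simp
qed

lemma mpoly_diff_torus_vector:
  assumes "a \<noteq> b"
  shows "mpoly_diff f p (\<lambda>i. if i = a then - p a else if i = b then p b else 0) =
     (\<Sum>m\<in>Poly_Mapping.keys f. Poly_Mapping.lookup f m * monom_eval m p *
        (of_nat (Poly_Mapping.lookup m b) - of_nat (Poly_Mapping.lookup m a)))"
proof -
  have v: "(\<lambda>i. if i = a then - p a else if i = b then p b else 0) =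
           (\<lambda>i. (- 1) * (if i = a then p a else 0) + (if i = b then p b else 0))"
    using assms by auto
  show ?thesis
    unfolding v mpoly_diff_add mpoly_diff_scale mpoly_diff_scaled_unit_vector
    by (simp add: sum_subtractf[symmetric] right_diff_distrib)
qed

lemma mpoly_diff_eq_0_if_translation_invariant:
  assumes inf: "infinite (UNIV :: 'a::field set)"
    and van: "\<And>c. mpoly_eval f (p(k := p k + c)) = (0::'a)"
  shows "mpoly_diff f p (\<lambda>i. if i = k then 1 else 0) = 0"
proof -
  define P where "P = (\<Sum>m\<in>Poly_Mapping.keys f.
     smult (Poly_Mapping.lookup f m * (\<Prod>i\<in>Poly_Mapping.keys m - {k}. p i ^ Poly_Mapping.lookup m i))
           ([:p k, 1:] ^ Poly_Mapping.lookup m k))"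
  have "poly P c = mpoly_eval f (p(k := p k + c))" for c
    unfolding P_def mpoly_eval_fun_upd poly_sum by (simp add: mult_ac)
  then have "P = 0" using van poly_eq_0_if_infinite_roots[OF inf] by simp
  then have "poly (pderiv P) 0 = 0" by simp
  moreover have "poly (pderiv P) 0 = mpoly_diff f p (\<lambda>i. if i = k then 1 else 0)"
    unfolding P_def mpoly_diff_unit_vector pderiv_sum poly_sum
    by (simp add: pderiv_smult pderiv_power pderiv_pCons mult_ac)
  ultimately show ?thesis by simp
qed

text \<open>Multiplying by c^D, with D bounding the degree in z_a, clears the denominators
  along the torus orbit, making it a polynomial in c.\<close>
lemma monom_eval_torus_action:
  fixes c :: "'a::field"
  assumes "a \<noteq> b" "c \<noteq> 0" "Poly_Mapping.lookup m a \<le> D"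
  shows "c ^ D * monom_eval m (p(a := p a / c, b := p b * c)) =
         c ^ (Poly_Mapping.lookup m b + D - Poly_Mapping.lookup m a) * monom_eval m p"
proof -
  let ?ma = "Poly_Mapping.lookup m a" and ?mb = "Poly_Mapping.lookup m b"
  let ?q = "p(a := p a / c, b := p b * c)"
  have rest: "(\<Prod>i\<in>Poly_Mapping.keys m - {a,b}. ?q i ^ Poly_Mapping.lookup m i) =
              (\<Prod>i\<in>Poly_Mapping.keys m - {a,b}. p i ^ Poly_Mapping.lookup m i)"
    by (rule prod.cong) auto
  have "c ^ D * (p a / c) ^ ?ma = c ^ (D - ?ma) * p a ^ ?ma"
  proof -
    have "c ^ D = c ^ (D - ?ma) * c ^ ?ma" using assms(3) by (simp flip: power_add)
    then show ?thesis using assms(2) by (simp add: power_divide)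
  qed
  moreover have "c ^ (?mb + D - ?ma) = c ^ ?mb * c ^ (D - ?ma)"
    using assms(3) by (simp flip: power_add)
  ultimately show ?thesis
    using assms(1)
    unfolding monom_eval_split2[OF assms(1), of m ?q] monom_eval_split2[OF assms(1), of m p] rest
    by (simp add: power_mult_distrib mult_ac)
qed

lemma mpoly_diff_eq_0_if_torus_invariant:
  fixes p :: "'v \<Rightarrow> 'a::field"
  assumes inf: "infinite (UNIV :: 'a set)" and ab: "a \<noteq> b"
    and van: "\<And>c. c \<noteq> 0 \<Longrightarrow> mpoly_eval f (p(a := p a / c, b := p b * c)) = 0"
  shows "mpoly_diff f p (\<lambda>i. if i = a then - p a else if i = b then p b else 0) = 0"
proof -
  let ?fm = "Poly_Mapping.lookup f"
  let ?ma = "\<lambda>m. Poly_Mapping.lookup m a" and ?mb = "\<lambda>m. Poly_Mapping.lookup m b"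
  define D where "D = (\<Sum>m\<in>Poly_Mapping.keys f. ?ma m)"
  have D_bound: "?ma m \<le> D" if "m \<in> Poly_Mapping.keys f" for m
    unfolding D_def using that by (intro member_le_sum) auto
  define P where "P = (\<Sum>m\<in>Poly_Mapping.keys f. smult (?fm m * monom_eval m p) (monom 1 (?mb m + D - ?ma m)))"
  have "poly P c = c ^ D * mpoly_eval f (p(a := p a / c, b := p b * c))" if "c \<noteq> 0" for c
    unfolding P_def poly_sum mpoly_eval_eq_sum_monom_eval sum_distrib_left
    by (intro sum.cong refl) (use monom_eval_torus_action[OF ab that D_bound] in \<open>simp add: poly_monom mult_ac\<close>)
  moreover have "infinite {c::'a. c \<noteq> 0}"
    using inf infinite_remove[of UNIV 0] by (simp add: Collect_neg_eq Compl_eq_Diff_UNIV)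
  ultimately have "P = 0" using van poly_eq_0_if_infinite_roots[of "{c. c \<noteq> 0}" P] by simp
  \<comment> \<open>the orbit passes through p at c = 1\<close>
  then have "poly (pderiv P) 1 = 0" by simp
  moreover have "poly (pderiv P) 1 = mpoly_diff f p (\<lambda>i. if i = a then - p a else if i = b then p b else 0)
                   + of_nat D * mpoly_eval f p"
    unfolding P_def pderiv_sum poly_sum mpoly_diff_torus_vector[OF ab] mpoly_eval_eq_sum_monom_eval
      sum_distrib_left sum.distrib[symmetric]
  proof (intro sum.cong refl)
    fix m assume "m \<in> Poly_Mapping.keys f"
    then have "?ma m \<le> ?mb m + D" using D_bound by (simp add: trans_le_add2)
    then have eq: "(of_nat (?mb m + D - ?ma m) :: 'a) = of_nat (?mb m) + of_nat D - of_nat (?ma m)"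
      by (simp add: of_nat_diff)
    then show "poly (pderiv (smult (?fm m * monom_eval m p) (monom 1 (?mb m + D - ?ma m)))) 1 =
      ?fm m * monom_eval m p * (of_nat (?mb m) - of_nat (?ma m)) + of_nat D * (?fm m * monom_eval m p)"
      by (simp add: pderiv_smult pderiv_monom poly_monom eq) (simp add: algebra_simps)
  qed
  moreover have "mpoly_eval f p = 0" using van[of 1] by simp
  ultimately show ?thesis by simp
qed

lemma tangent_space_lincomb:
  assumes "finite J" "\<And>j. j \<in> J \<Longrightarrow> u j \<in> tangent_space V p"
  shows "(\<lambda>i. \<Sum>j\<in>J. s j * u j i) \<in> tangent_space V p"
  unfolding tangent_space_def
proof (intro CollectI ballI mpoly_diff_lincomb_eq_0[OF assms(1)])
  fix f j assume "f \<in> vanishing_ideal V" "j \<in> J"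
  then show "mpoly_diff f p (u j) = 0" using assms(2) unfolding tangent_space_def by blast
qed

lemma unit_vector_in_tangent_space_if_translation_invariant:
  assumes "infinite (UNIV :: 'a::field set)" "\<And>c. p(k := p k + c) \<in> V"
  shows "(\<lambda>i. if i = k then 1 else 0 :: 'a) \<in> tangent_space V p"
  unfolding tangent_space_def
proof (intro CollectI ballI mpoly_diff_eq_0_if_translation_invariant[OF assms(1)])
  fix f c assume "f \<in> vanishing_ideal V"
  then show "mpoly_eval f (p(k := p k + c)) = 0" using assms(2) unfolding vanishing_ideal_def by blast
qed

lemma torus_vector_in_tangent_space_if_torus_invariant:
  assumes "infinite (UNIV :: 'a::field set)" "a \<noteq> b"
    and "\<And>c. c \<noteq> 0 \<Longrightarrow> p(a := p a / c, b := p b * c) \<in> V"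
  shows "(\<lambda>i. if i = a then - p a else if i = b then p b else 0 :: 'a) \<in> tangent_space V p"
  unfolding tangent_space_def
proof (intro CollectI ballI mpoly_diff_eq_0_if_torus_invariant[OF assms(1,2)])
  fix f and c :: 'a assume "f \<in> vanishing_ideal V" "c \<noteq> 0"
  then show "mpoly_eval f (p(a := p a / c, b := p b * c)) = 0"
    using assms(3) unfolding vanishing_ideal_def by blast
qed

lemma mpoly_eval_bilin_form:
  "mpoly_eval (bilin_form L r) z = (\<Sum>i\<in>UNIV. L r i * z (Inl i) * z (Inr i))"
proof -
  have "monom_eval (Poly_Mapping.single (Inl i) (1::nat) + Poly_Mapping.single (Inr i) 1) z =
        z (Inl i) * z (Inr i)" for i
  proof -
    let ?m = "Poly_Mapping.single (Inl i) (1::nat) + Poly_Mapping.single (Inr i) 1"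
    have keys: "Poly_Mapping.keys ?m - {Inl i, Inr i} = {}"
      using keys_add[of "Poly_Mapping.single (Inl i) (1::nat)" "Poly_Mapping.single (Inr i) 1"] by auto
    show ?thesis
      unfolding monom_eval_split2[of "Inl i" "Inr i", OF Inl_not_Inr] keys
      by (simp add: lookup_add lookup_single_not_eq)
  qed
  then show ?thesis
    unfolding bilin_form_def mpoly_eval_sum mpoly_eval_single by (simp add: mult.assoc)
qed

lemma zero_set_bilin_form_torus_invariant:
  fixes p :: "'n::finite + 'n \<Rightarrow> 'a::field"
  assumes "p \<in> zero_set (bilin_form L ` R)" "c \<noteq> 0"
  shows "p(Inl j := p (Inl j) / c, Inr j := p (Inr j) * c) \<in> zero_set (bilin_form L ` R)"
proof -
  have "mpoly_eval (bilin_form L r) (p(Inl j := p (Inl j) / c, Inr j := p (Inr j) * c)) =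
        mpoly_eval (bilin_form L r) p" for r
    unfolding mpoly_eval_bilin_form by (intro sum.cong refl) (use assms(2) in \<open>auto simp: field_simps\<close>)
  then show ?thesis using assms(1) unfolding zero_set_def by auto
qed

lemma prod_with_affine_translation_invariant:
  "p \<in> prod_with_affine X \<Longrightarrow> p(Inl j := y) \<in> prod_with_affine X"
  unfolding prod_with_affine_def by simp

lemma torus_and_translation_vectors_span:
  fixes p :: "'n::finite + 'n \<Rightarrow> 'a::field"
  assumes "\<forall>j. p (Inr j) \<noteq> 0"
  defines "v j \<equiv> (\<lambda>i. if i = Inl j then - p (Inl j) else if i = Inr j then p (Inr j) else 0)"
    and "e j \<equiv> (\<lambda>i. if i = Inl j then 1 else 0)"
  shows "w = (\<lambda>i. (\<Sum>j\<in>UNIV. w (Inr j) / p (Inr j) * v j i) +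
                  (\<Sum>j\<in>UNIV. (w (Inl j) + w (Inr j) / p (Inr j) * p (Inl j)) * e j i))"
proof
  fix i
  show "w i = (\<Sum>j\<in>UNIV. w (Inr j) / p (Inr j) * v j i) +
              (\<Sum>j\<in>UNIV. (w (Inl j) + w (Inr j) / p (Inr j) * p (Inl j)) * e j i)"
    using assms(1) unfolding v_def e_def by (cases i) (simp_all add: if_distrib cong: if_cong)
qed

theorem lemma1p1:
  fixes X :: "('n::finite \<Rightarrow> 'a::field) set"
    and L :: "nat \<Rightarrow> 'n \<Rightarrow> 'a" and l :: nat
    and p :: "'n + 'n \<Rightarrow> 'a"
  assumes "alg_closed TYPE('a)"
    and "zariski_closed X"
    and "p \<in> zero_set (bilin_form L ` {..<l})"
    and "smooth_point (prod_with_affine X) p"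
    and "\<forall>i. p (Inr i) \<noteq> 0"
  shows "transverse_at (zero_set (bilin_form L ` {..<l})) (prod_with_affine X) p"
proof -
  let ?V = "zero_set (bilin_form L ` {..<l})" and ?W = "prod_with_affine X"
  define v where "v j = (\<lambda>i. if i = Inl j then - p (Inl j) else if i = Inr j then p (Inr j) else 0)" for j
  define e where "e j = (\<lambda>i::'n + 'n. if i = Inl j then 1 else 0 :: 'a)" for j
  have inf: "infinite (UNIV :: 'a set)" using assms(1) by (rule infinite_UNIV_if_alg_closed)
  have pW: "p \<in> ?W" using assms(4) unfolding smooth_point_def by simp
  have v: "v j \<in> tangent_space ?V p" for j
    unfolding v_def using inf assms(3)
    by (intro torus_vector_in_tangent_space_if_torus_invariant zero_set_bilin_form_torus_invariant) auto
  have e: "e j \<in> tangent_space ?W p" for j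
    unfolding e_def using inf pW
    by (intro unit_vector_in_tangent_space_if_translation_invariant prod_with_affine_translation_invariant)
  have "\<exists>a\<in>tangent_space ?V p. \<exists>b\<in>tangent_space ?W p. w = (\<lambda>i. a i + b i)" for w
  proof (intro bexI)
    show "w = (\<lambda>i. (\<Sum>j\<in>UNIV. w (Inr j) / p (Inr j) * v j i) +
                    (\<Sum>j\<in>UNIV. (w (Inl j) + w (Inr j) / p (Inr j) * p (Inl j)) * e j i))"
      unfolding v_def e_def by (rule torus_and_translation_vectors_span[OF assms(5)])
  qed (intro tangent_space_lincomb finite v e)+
  then show ?thesis unfolding transverse_at_def by (intro conjI allI assms(3) pW)
qed

end
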